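(* Assume the user paths are pairwise edge-disjoint. Let $E^*$ be an $s$-$t$ path maximizing $\Lambda(\cdot,P)$ over all directed $s$-$t$ paths, and let $d$ be its number of edges. If the initial recursion depth satisfies $I\ge\lceil\log d\rceil$, then the Recursive Greedy algorithm (with $F=\Lambda(\cdot,P)$) returns an $s$-$t$ path $E_{\mathbf{f}}$ with $\Lambda(E_{\mathbf{f}},P)\ge\frac{1}{\lceil\log d\rceil+1}\Lambda(E^*,P)$. (Logarithms are base 2.)
   Context: $G=(V,E)$ is a simple directed acyclic graph with capacities $C\in\mathbb{R}_{\ge0}^E$, $s,t\in V$ joined by a directed path, and budget $0<\gamma\le\min_eC(e)$. User paths $P=\{p_1,\dots,p_k\}$ are directed paths (edge sets) with initial values $\lambda_i\ge0$, $\sum_{i:e\in p_i}\lambda_i\le C(e)$. For $A\subseteq E$, $T(A,P)$ is the optimal value of: maximize $\sum_i\tilde\lambda_i$ s.t. $\sum_{i:e\in p_i}\tilde\lambda_i\le C(e)-\gamma\mathbf{1}_{\{e\in A\}}$ for all $e$, $0\le\tilde\lambda_i\le\lambda_i$; $\Lambda(A,P)=\sum_i\lambda_i-T(A,P)$. (For an $s$-$t$ path $E'$, $\Lambda(E',P)$ equals the throughput reduction caused by injecting flow $\gamma$ along $E'$.) Recursive Greedy algorithm for a set function $F:2^E\to\mathbb{R}$, with $F_X(A)=F(A\cup X)-F(X)$: the recursive procedure $RG(u_1,u_2,X,i)$ ($u_1,u_2\in V$, $X\subseteq E$, integer $i\ge0$) lets $S$ be a shortest (fewest edges) directed $u_1$-$u_2$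 path; if none exists it returns "infeasible"; if $i=0$ it returns $S$; otherwise it sets $best:=S$, $r:=F_X(S)$ and, for every $v\in V$, computes $Q_1=RG(u_1,v,X,i-1)$ and then $Q_2=RG(v,u_2,X\cup Q_1,i-1)$ (skipping $v$ if a call is infeasible), and if $F_X(Q_1\cup Q_2)>r$ sets $r:=F_X(Q_1\cup Q_2)$, $best:=Q_1\cup Q_2$; finally it returns $best$. The algorithm outputs $RG(s,t,\emptyset,I)$. *)

theory Defs
  imports Complex_Main
begin

type_synonym 'v edge = "'v \<times> 'v"

definition is_vpath :: "'v edge set \<Rightarrow> 'v \<Rightarrow> 'v \<Rightarrow> 'v list \<Rightarrow> bool" where
  "is_vpath E u v ps \<longleftrightarrow> ps \<noteq> [] \<and> hd ps = u \<and> last ps = v \<and> distinct ps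
      \<and> (\<forall>j. Suc j < length ps \<longrightarrow> (ps ! j, ps ! Suc j) \<in> E)"

definition vpath_edges :: "'v list \<Rightarrow> 'v edge set" where
  "vpath_edges ps = set (zip ps (tl ps))"

definition is_path :: "'v edge set \<Rightarrow> 'v \<Rightarrow> 'v \<Rightarrow> 'v edge set \<Rightarrow> bool" where
  "is_path E u v S \<longleftrightarrow> (\<exists>ps. is_vpath E u v ps \<and> S = vpath_edges ps)"

definition has_path :: "'v edge set \<Rightarrow> 'v \<Rightarrow> 'v \<Rightarrow> bool" where
  "has_path E u v \<longleftrightarrow> (\<exists>S. is_path E u v S)"

definition is_dpath :: "'v edge set \<Rightarrow> 'v edge set \<Rightarrow> bool" where
  "is_dpath E S \<longleftrightarrow> (\<exists>u v. is_path E u v S)"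

definition shortest_path_selector :: "'v edge set \<Rightarrow> ('v \<Rightarrow> 'v \<Rightarrow> 'v edge set) \<Rightarrow> bool" where
  "shortest_path_selector E sp \<longleftrightarrow> (\<forall>u v. has_path E u v \<longrightarrow>
      is_path E u v (sp u v) \<and> (\<forall>S. is_path E u v S \<longrightarrow> card (sp u v) \<le> card S))"

text \<open>Feasible reduced throughputs for the LP defining T(A,P); users indexed by i < k.\<close>
definition feasible_tp ::
  "'v edge set \<Rightarrow> ('v edge \<Rightarrow> real) \<Rightarrow> real \<Rightarrow> nat \<Rightarrow> (nat \<Rightarrow> 'v edge set) \<Rightarrow> (nat \<Rightarrow> real)
     \<Rightarrow> 'v edge set \<Rightarrow> (nat \<Rightarrow> real) \<Rightarrow> bool" where
  "feasible_tp E C \<gamma> k p lam A lt \<longleftrightarrow>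
     (\<forall>e\<in>E. (\<Sum>i\<in>{i. i < k \<and> e \<in> p i}. lt i) \<le> C e - \<gamma> * (if e \<in> A then 1 else 0))
     \<and> (\<forall>i<k. 0 \<le> lt i \<and> lt i \<le> lam i)"

definition T_opt ::
  "'v edge set \<Rightarrow> ('v edge \<Rightarrow> real) \<Rightarrow> real \<Rightarrow> nat \<Rightarrow> (nat \<Rightarrow> 'v edge set) \<Rightarrow> (nat \<Rightarrow> real)
     \<Rightarrow> 'v edge set \<Rightarrow> real" where
  "T_opt E C \<gamma> k p lam A = Sup {(\<Sum>i<k. lt i) | lt. feasible_tp E C \<gamma> k p lam A lt}"

definition Lambda ::
  "'v edge set \<Rightarrow> ('v edge \<Rightarrow> real) \<Rightarrow> real \<Rightarrow> nat \<Rightarrow> (nat \<Rightarrow> 'v edge set) \<Rightarrow> (nat \<Rightarrow> real)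
     \<Rightarrow> 'v edge set \<Rightarrow> real" where
  "Lambda E C \<gamma> k p lam A = (\<Sum>i<k. lam i) - T_opt E C \<gamma> k p lam A"

text \<open>Recursive Greedy RG(u1,u2,X,i) for a set function F, with shortest-path selector sp
  and the vertices of V enumerated in the order vs.  None = "infeasible".\<close>
primrec RG ::
  "nat \<Rightarrow> 'v edge set \<Rightarrow> ('v \<Rightarrow> 'v \<Rightarrow> 'v edge set) \<Rightarrow> 'v list \<Rightarrow> ('v edge set \<Rightarrow> real)
     \<Rightarrow> 'v \<Rightarrow> 'v \<Rightarrow> 'v edge set \<Rightarrow> 'v edge set option" where
  "RG 0 E sp vs F u1 u2 X = (if has_path E u1 u2 then Some (sp u1 u2) else None)"
| "RG (Suc i) E sp vs F u1 u2 X =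
     (if \<not> has_path E u1 u2 then None else
      Some (fst (fold (\<lambda>v (best, r).
          (case RG i E sp vs F u1 v X of
             None \<Rightarrow> (best, r)
           | Some Q1 \<Rightarrow>
              (case RG i E sp vs F v u2 (X \<union> Q1) of
                 None \<Rightarrow> (best, r)
               | Some Q2 \<Rightarrow>
                  (if F ((Q1 \<union> Q2) \<union> X) - F X > r
                   then (Q1 \<union> Q2, F ((Q1 \<union> Q2) \<union> X) - F X) else (best, r)))))
        vs (sp u1 u2, F (sp u1 u2 \<union> X) - F X))))"

end

theory Submission
  imports Defs "HOL-Library.Log_Nat"
begin

text \<open>With edge-disjoint user paths the LP defining \<open>T(A,P)\<close> decouples: user \<open>i\<close> keeps the rate
  \<open>min \<lambda>\<^sub>i (min {C e - \<gamma> | e \<in> p\<^sub>i \<inter> A})\<close>. So \<open>\<Lambda>(\<cdot>,P)\<close> is a sum of monotone submodular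
  functions of \<open>A\<close>. For a monotone submodular \<open>F\<close>, a call of depth \<open>i \<ge> j\<close> returns a path whose
  marginal gain is at least \<open>1/(j+1)\<close> times that of any path \<open>S\<close> with \<open>|S| \<le> 2\<^sup>j\<close>, by induction:
  split \<open>S\<close> at its middle vertex \<open>v\<close> into \<open>S\<^sub>1, S\<^sub>2\<close>; the recursive calls through \<open>v\<close> return
  \<open>Q\<^sub>1, Q\<^sub>2\<close> with \<open>F\<^sub>X(Q\<^sub>1) \<ge> F\<^sub>X(S\<^sub>1)/j\<close> and \<open>F\<^bsub>X\<union>Q\<^sub>1\<^esub>(Q\<^sub>2) \<ge> F\<^bsub>X\<union>Q\<^sub>1\<^esub>(S\<^sub>2)/j\<close>, and
  \<open>F\<^bsub>X\<union>Q\<^sub>1\<^esub>(S\<^sub>2) \<ge> F\<^sub>X(S\<^sub>2) - F\<^sub>X(Q\<^sub>1)\<close> by monotonicity, which combine to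
  \<open>F\<^sub>X(Q\<^sub>1 \<union> Q\<^sub>2) \<ge> F\<^sub>X(S)/(j+1)\<close>. The theorem is the case \<open>S = E\<^sup>*\<close>, \<open>j = \<lceil>log d\<rceil>\<close>.\<close>

section \<open>Paths in a directed acyclic graph\<close>

lemma vpath_edges_simps [simp]:
  "vpath_edges [] = {}"
  "vpath_edges [x] = {}"
  "vpath_edges (x # y # zs) = insert (x, y) (vpath_edges (y # zs))"
  by (simp_all add: vpath_edges_def)

lemma finite_vpath_edges [simp]: "finite (vpath_edges ps)"
  by (simp add: vpath_edges_def)

lemma vpath_edges_conv_nth: "vpath_edges ps = {(ps ! j, ps ! Suc j) | j. Suc j < length ps}"
  by (auto simp: vpath_edges_def set_zip nth_tl)

lemma card_vpath_edges: "distinct ps \<Longrightarrow> card (vpath_edges ps) = length ps - 1"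
  by (simp add: vpath_edges_def distinct_card distinct_zipI1)

lemma vpath_edges_append:
  "xs \<noteq> [] \<Longrightarrow> vpath_edges (xs @ ys) = vpath_edges xs \<union> vpath_edges (last xs # ys)"
  by (induction xs rule: induct_list012) auto

lemma is_vpath_iff:
  "is_vpath E u v ps \<longleftrightarrow> ps \<noteq> [] \<and> hd ps = u \<and> last ps = v \<and> distinct ps \<and> vpath_edges ps \<subseteq> E"
  unfolding is_vpath_def vpath_edges_conv_nth by blast

lemma rtrancl_to_last: "vpath_edges ps \<subseteq> E \<Longrightarrow> w \<in> set ps \<Longrightarrow> (w, last ps) \<in> E\<^sup>*"
  by (induction ps arbitrary: w rule: induct_list012) (auto intro: converse_rtrancl_into_rtrancl)

lemma trancl_from_hd: "vpath_edges ps \<subseteq> E \<Longrightarrow> w \<in> set (tl ps) \<Longrightarrow> (hd ps, w) \<in> E\<^sup>+"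
  by (induction ps rule: induct_list012) (auto intro: trancl_into_trancl2)

lemma is_vpath_append_tl:
  assumes ps1: "is_vpath E u v ps1" and ps2: "is_vpath E v w ps2" and "acyclic E"
  shows "is_vpath E u w (ps1 @ tl ps2)"
    and "vpath_edges (ps1 @ tl ps2) = vpath_edges ps1 \<union> vpath_edges ps2"
proof -
  obtain ys where ps2_eq: "ps2 = v # ys"
    using ps2 unfolding is_vpath_iff by (cases ps2) auto
  show edges: "vpath_edges (ps1 @ tl ps2) = vpath_edges ps1 \<union> vpath_edges ps2"
    using ps1 ps2_eq vpath_edges_append[of ps1 ys] unfolding is_vpath_iff by simp
  have "x \<notin> set ys" if "x \<in> set ps1" for x
  proof
    assume "x \<in> set ys"
    then have "(v, x) \<in> E\<^sup>+"
      using ps2 trancl_from_hd[of ps2 E x] unfolding is_vpath_iff ps2_eq by simp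
    moreover have "(x, v) \<in> E\<^sup>*"
      using ps1 that rtrancl_to_last[of ps1 E x] unfolding is_vpath_iff by simp
    ultimately show False
      using \<open>acyclic E\<close> unfolding acyclic_def by (meson trancl_rtrancl_trancl)
  qed
  moreover have "last (ps1 @ ys) = w"
    using ps1 ps2 unfolding is_vpath_iff ps2_eq by (cases "ys = []") auto
  ultimately show "is_vpath E u w (ps1 @ tl ps2)"
    using ps1 ps2 edges unfolding is_vpath_iff ps2_eq by auto
qed

lemma is_path_Un:
  "acyclic E \<Longrightarrow> is_path E u v S1 \<Longrightarrow> is_path E v w S2 \<Longrightarrow> is_path E u w (S1 \<union> S2)"
  unfolding is_path_def using is_vpath_append_tl by metis

lemma has_pathI: "is_path E u v S \<Longrightarrow> has_path E u v"
  unfolding has_path_def by blast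

lemma is_vpath_take_drop:
  assumes ps: "is_vpath E u w ps" and m: "m < length ps"
  shows "is_vpath E u (ps ! m) (take (Suc m) ps)" and "is_vpath E (ps ! m) w (drop m ps)"
    and "vpath_edges ps = vpath_edges (take (Suc m) ps) \<union> vpath_edges (drop m ps)"
proof -
  have last_take: "last (take (Suc m) ps) = ps ! m"
    using m by (simp add: take_Suc_conv_app_nth)
  have "vpath_edges (take (Suc m) ps @ drop (Suc m) ps)
      = vpath_edges (take (Suc m) ps) \<union> vpath_edges (drop m ps)"
    using m by (subst vpath_edges_append) (auto simp: last_take Cons_nth_drop_Suc)
  then show "vpath_edges ps = vpath_edges (take (Suc m) ps) \<union> vpath_edges (drop m ps)"
    by simp
  then show "is_vpath E u (ps ! m) (take (Suc m) ps)" and "is_vpath E (ps ! m) w (drop m ps)"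
    using ps m last_take unfolding is_vpath_iff
    by (auto simp: hd_drop_conv_nth hd_take)
qed

lemma is_path_split_half:
  assumes S: "is_path E u w S" and "S \<noteq> {}" and card_S: "card S \<le> 2 * K"
  obtains v S1 S2 where "is_path E u v S1" "is_path E v w S2" "S = S1 \<union> S2"
    "card S1 \<le> K" "card S2 \<le> K" "v \<in> Domain E"
proof -
  obtain ps where ps: "is_vpath E u w ps" and S_eq: "S = vpath_edges ps"
    using S unfolding is_path_def by blast
  define m where "m = (length ps - 1) div 2"
  have "distinct ps"
    using ps unfolding is_vpath_iff by blast
  have "card S = length ps - 1"
    using card_vpath_edges[OF \<open>distinct ps\<close>] S_eq by simp
  moreover have "card S \<noteq> 0"
    using \<open>S \<noteq> {}\<close> S_eq by simp
  ultimately have m: "Suc m < length ps" "m \<le> K" "length ps - Suc m \<le> K"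
    using card_S unfolding m_def by linarith+
  show ?thesis
  proof (rule that)
    show "is_path E u (ps ! m) (vpath_edges (take (Suc m) ps))"
      and "is_path E (ps ! m) w (vpath_edges (drop m ps))"
      using is_vpath_take_drop(1,2)[OF ps Suc_lessD[OF m(1)]] unfolding is_path_def by blast+
    show "S = vpath_edges (take (Suc m) ps) \<union> vpath_edges (drop m ps)"
      using is_vpath_take_drop(3)[OF ps Suc_lessD[OF m(1)]] S_eq by simp
    show "card (vpath_edges (take (Suc m) ps)) \<le> K" and "card (vpath_edges (drop m ps)) \<le> K"
      using m by (simp_all add: card_vpath_edges \<open>distinct ps\<close>)
    have "(ps ! m, ps ! Suc m) \<in> E"
      using ps m(1) unfolding is_vpath_def by blast
    then show "ps ! m \<in> Domain E"
      by blast
  qed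
qed

lemma is_path_card_le_1:
  assumes "is_path E u v S" and "card S \<le> 1"
  shows "S = (if u = v then {} else {(u, v)})"
proof -
  obtain ps where ps: "is_vpath E u v ps" and S_eq: "S = vpath_edges ps"
    using assms(1) unfolding is_path_def by blast
  then have "length ps - 1 \<le> 1"
    using assms(2) card_vpath_edges[of ps] unfolding is_vpath_iff by simp
  moreover have "ps \<noteq> []"
    using ps unfolding is_vpath_iff by blast
  ultimately consider x where "ps = [x]" | x y where "ps = [x, y]"
    by (cases ps; cases "tl ps") auto
  then show ?thesis
    using ps unfolding S_eq is_vpath_iff by cases auto
qed

lemma shortest_path_eq_short_path:
  assumes "shortest_path_selector E sp" and S: "is_path E u v S" "card S \<le> 1"
  shows "sp u v = S"
proof -
  have "is_path E u v (sp u v)" and "card (sp u v) \<le> 1"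
    using assms has_pathI unfolding shortest_path_selector_def by fastforce+
  then show ?thesis
    using is_path_card_le_1 S by metis
qed

section \<open>Marginal gains and submodularity\<close>

definition marginal :: "('a set \<Rightarrow> real) \<Rightarrow> 'a set \<Rightarrow> 'a set \<Rightarrow> real" where
  "marginal F X S = F (S \<union> X) - F X"

definition submodular :: "('a set \<Rightarrow> real) \<Rightarrow> bool" where
  "submodular F \<longleftrightarrow> (\<forall>A B S. A \<subseteq> B \<longrightarrow> marginal F B S \<le> marginal F A S)"

lemma marginal_empty [simp]: "marginal F {} S = F S - F {}"
  by (simp add: marginal_def)

lemma marginal_nonneg: "mono F \<Longrightarrow> 0 \<le> marginal F X S"
  unfolding marginal_def by (simp add: monoD)

lemma marginal_Un: "marginal F X (A \<union> B) = marginal F X A + marginal F (X \<union> A) B"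
  unfolding marginal_def by (simp add: Un_ac)

lemma marginal_Un_le:
  "submodular F \<Longrightarrow> marginal F X (A \<union> B) \<le> marginal F X A + marginal F X B"
  unfolding marginal_Un submodular_def by simp

lemma marginal_diff_le:
  "mono F \<Longrightarrow> marginal F X B - marginal F X A \<le> marginal F (X \<union> A) B"
  using monoD[of F "B \<union> X" "A \<union> B \<union> X"] marginal_Un[of F X A B]
  unfolding marginal_def by (simp add: Un_ac)

section \<open>The recursive greedy algorithm\<close>

definition RG_step ::
  "nat \<Rightarrow> 'v edge set \<Rightarrow> ('v \<Rightarrow> 'v \<Rightarrow> 'v edge set) \<Rightarrow> 'v list \<Rightarrow> ('v edge set \<Rightarrow> real)
     \<Rightarrow> 'v \<Rightarrow> 'v \<Rightarrow> 'v edge set \<Rightarrow> 'v \<Rightarrow> 'v edge set \<times> real \<Rightarrow> 'v edge set \<times> real" where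
  "RG_step i E sp vs F u1 u2 X v a =
     (case RG i E sp vs F u1 v X of
        None \<Rightarrow> a
      | Some Q1 \<Rightarrow>
          (case RG i E sp vs F v u2 (X \<union> Q1) of
             None \<Rightarrow> a
           | Some Q2 \<Rightarrow> if marginal F X (Q1 \<union> Q2) > snd a
                        then (Q1 \<union> Q2, marginal F X (Q1 \<union> Q2)) else a))"

lemma RG_Suc_fold:
  "RG (Suc i) E sp vs F u1 u2 X =
     (if has_path E u1 u2
      then Some (fst (fold (RG_step i E sp vs F u1 u2 X) vs (sp u1 u2, marginal F X (sp u1 u2))))
      else None)"
proof -
  have "RG_step i E sp vs F u1 u2 X = (\<lambda>v (best, r).
          (case RG i E sp vs F u1 v X of
             None \<Rightarrow> (best, r)
           | Some Q1 \<Rightarrow>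
              (case RG i E sp vs F v u2 (X \<union> Q1) of
                 None \<Rightarrow> (best, r)
               | Some Q2 \<Rightarrow>
                  (if F ((Q1 \<union> Q2) \<union> X) - F X > r
                   then (Q1 \<union> Q2, F ((Q1 \<union> Q2) \<union> X) - F X) else (best, r)))))"
    by (auto simp: fun_eq_iff RG_step_def marginal_def split: option.split)
  then show ?thesis
    by (simp add: marginal_def)
qed

declare RG.simps(2) [simp del]

lemma RG_eq_None_iff: "RG i E sp vs F u1 u2 X = None \<longleftrightarrow> \<not> has_path E u1 u2"
  by (cases i) (auto simp: RG_Suc_fold)

lemma snd_RG_step_ge: "snd a \<le> snd (RG_step i E sp vs F u1 u2 X v a)"
  by (auto simp: RG_step_def split: option.split)

lemma RG_step_ge_candidate:
  "RG i E sp vs F u1 v X = Some Q1 \<Longrightarrow> RG i E sp vs F v u2 (X \<union> Q1) = Some Q2 \<Longrightarrow>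
    marginal F X (Q1 \<union> Q2) \<le> snd (RG_step i E sp vs F u1 u2 X v a)"
  by (auto simp: RG_step_def)

lemma RG_step_invariant:
  assumes "acyclic E" and RG_i: "\<And>a b Y Q. RG i E sp vs F a b Y = Some Q \<Longrightarrow> is_path E a b Q"
    and inv: "is_path E u1 u2 (fst a) \<and> snd a = marginal F X (fst a)"
  shows "is_path E u1 u2 (fst (RG_step i E sp vs F u1 u2 X v a))
    \<and> snd (RG_step i E sp vs F u1 u2 X v a) = marginal F X (fst (RG_step i E sp vs F u1 u2 X v a))"
proof (cases "RG i E sp vs F u1 v X")
  case (Some Q1)
  show ?thesis
  proof (cases "RG i E sp vs F v u2 (X \<union> Q1)")
    case (Some Q2)
    have "is_path E u1 u2 (Q1 \<union> Q2)"
      using is_path_Un[OF \<open>acyclic E\<close> RG_i RG_i] \<open>RG i E sp vs F u1 v X = Some Q1\<close> Some by blast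
    then show ?thesis
      using inv \<open>RG i E sp vs F u1 v X = Some Q1\<close> Some by (simp add: RG_step_def)
  qed (use inv Some in \<open>simp add: RG_step_def\<close>)
qed (use inv in \<open>simp add: RG_step_def\<close>)

lemma snd_fold_ge_start:
  fixes g :: "'a \<Rightarrow> 'b \<times> 'c::order \<Rightarrow> 'b \<times> 'c"
  assumes step: "\<And>v a. snd a \<le> snd (g v a)"
  shows "snd a \<le> snd (fold g vs a)"
proof (induction vs arbitrary: a)
  case (Cons v vs)
  show ?case
    using step[of a v] Cons.IH[of "g v a"] by simp
qed simp

lemma snd_fold_ge_step:
  fixes g :: "'a \<Rightarrow> 'b \<times> 'c::order \<Rightarrow> 'b \<times> 'c"
  assumes step: "\<And>v a. snd a \<le> snd (g v a)" and "v \<in> set vs" and x: "\<And>a. x \<le> snd (g v a)"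
  shows "x \<le> snd (fold g vs a)"
proof -
  obtain xs ys where "vs = xs @ v # ys"
    using split_list[OF \<open>v \<in> set vs\<close>] by blast
  then show ?thesis
    using x[of "fold g xs a"] snd_fold_ge_start[where g = g and a = "g v (fold g xs a)" and vs = ys, OF step]
    by simp
qed

lemma RG_Suc_fold_invariant:
  fixes F :: "'v edge set \<Rightarrow> real" and X :: "'v edge set"
  assumes "acyclic E" and sp: "shortest_path_selector E sp" and "has_path E u1 u2"
    and RG_i: "\<And>a b Y Q. RG i E sp vs F a b Y = Some Q \<Longrightarrow> is_path E a b Q"
  defines "a \<equiv> fold (RG_step i E sp vs F u1 u2 X) vs (sp u1 u2, marginal F X (sp u1 u2))"
  shows "is_path E u1 u2 (fst a) \<and> snd a = marginal F X (fst a)"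
  unfolding a_def
proof (rule fold_invariant[where Q = "\<lambda>_. True"])
  show "is_path E u1 u2 (fst (sp u1 u2, marginal F X (sp u1 u2)))
    \<and> snd (sp u1 u2, marginal F X (sp u1 u2)) = marginal F X (fst (sp u1 u2, marginal F X (sp u1 u2)))"
    using sp \<open>has_path E u1 u2\<close> unfolding shortest_path_selector_def by simp
  show "is_path E u1 u2 (fst (RG_step i E sp vs F u1 u2 X v b))
      \<and> snd (RG_step i E sp vs F u1 u2 X v b) = marginal F X (fst (RG_step i E sp vs F u1 u2 X v b))"
    if "is_path E u1 u2 (fst b) \<and> snd b = marginal F X (fst b)" for v b
    using RG_step_invariant[OF \<open>acyclic E\<close> RG_i that] .
qed simp

lemma RG_is_path:
  assumes "acyclic E" and sp: "shortest_path_selector E sp"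
  shows "RG i E sp vs F u1 u2 X = Some P \<Longrightarrow> is_path E u1 u2 P"
proof (induction i arbitrary: u1 u2 X P)
  case 0
  then show ?case
    using sp unfolding shortest_path_selector_def by (auto split: if_splits)
next
  case (Suc i)
  then have "has_path E u1 u2"
    and P: "P = fst (fold (RG_step i E sp vs F u1 u2 X) vs (sp u1 u2, marginal F X (sp u1 u2)))"
    by (simp_all add: RG_Suc_fold split: if_splits)
  then show ?case
    using RG_Suc_fold_invariant[OF assms \<open>has_path E u1 u2\<close> Suc.IH] by simp
qed

lemma RG_Suc_marginal_ge:
  assumes "acyclic E" and sp: "shortest_path_selector E sp"
    and RG_P: "RG (Suc i) E sp vs F u1 u2 X = Some P"
  shows "marginal F X (sp u1 u2) \<le> marginal F X P"
    and "v \<in> set vs \<Longrightarrow> RG i E sp vs F u1 v X = Some Q1 \<Longrightarrow>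
      RG i E sp vs F v u2 (X \<union> Q1) = Some Q2 \<Longrightarrow> marginal F X (Q1 \<union> Q2) \<le> marginal F X P"
proof -
  let ?a = "fold (RG_step i E sp vs F u1 u2 X) vs (sp u1 u2, marginal F X (sp u1 u2))"
  have "has_path E u1 u2" and P: "P = fst ?a"
    using RG_P by (simp_all add: RG_Suc_fold split: if_splits)
  then have P_val: "marginal F X P = snd ?a"
    using RG_Suc_fold_invariant[OF assms(1,2) \<open>has_path E u1 u2\<close> RG_is_path[OF assms(1,2)]]
    by simp
  then show "marginal F X (sp u1 u2) \<le> marginal F X P"
    using snd_fold_ge_start[where g = "RG_step i E sp vs F u1 u2 X"
        and a = "(sp u1 u2, marginal F X (sp u1 u2))", OF snd_RG_step_ge]
    by simp
  show "marginal F X (Q1 \<union> Q2) \<le> marginal F X P"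
    if "v \<in> set vs" "RG i E sp vs F u1 v X = Some Q1" "RG i E sp vs F v u2 (X \<union> Q1) = Some Q2"
    using snd_fold_ge_step[where g = "RG_step i E sp vs F u1 u2 X",
        OF snd_RG_step_ge that(1) RG_step_ge_candidate[OF that(2,3)]] P_val
    by simp
qed

lemma RG_marginal_ge_short_path:
  assumes "acyclic E" and sp: "shortest_path_selector E sp"
    and RG_P: "RG i E sp vs F u1 u2 X = Some P" and S: "is_path E u1 u2 S" "card S \<le> 1"
  shows "marginal F X S \<le> marginal F X P"
proof (cases i)
  case 0
  then show ?thesis
    using RG_P shortest_path_eq_short_path[OF sp S] by (simp split: if_splits)
next
  case (Suc i')
  then show ?thesis
    using RG_Suc_marginal_ge(1)[OF assms(1,2) RG_P[unfolded Suc]] shortest_path_eq_short_path[OF sp S]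
    by simp
qed

text \<open>\<open>(a + b) / (j + 1)\<close> is the convex combination with weights \<open>1 / (j + 1)\<close> and
  \<open>j / (j + 1)\<close> of the two lower bounds \<open>a / j\<close> and \<open>((j - 1) a / j + b) / j\<close> of \<open>R\<close>.\<close>
lemma split_ratio_bound:
  fixes a b s q c R j :: real
  assumes j: "1 \<le> j" and s: "s \<le> a + b" and q: "a / j \<le> q"
    and c: "0 \<le> c" "b - q \<le> c" and R: "q + c / j \<le> R"
  shows "s / (j + 1) \<le> R"
proof -
  define B where "B = ((j - 1) * (a / j) + b) / j"
  have "a / j \<le> R"
    using q R c(1) j by (smt (verit) divide_nonneg_pos)
  moreover have "B \<le> R"
  proof -
    have "(j - 1) * (a / j) \<le> (j - 1) * q"
      using q j by (intro mult_left_mono) simp_all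
    then have "B \<le> ((j - 1) * q + b) / j"
      unfolding B_def using j by (simp add: divide_right_mono)
    also have "\<dots> = q + (b - q) / j"
      using j by (simp add: field_simps)
    also have "\<dots> \<le> q + c / j"
      using c(2) j by (simp add: divide_right_mono)
    finally show ?thesis
      using R by simp
  qed
  ultimately have "a / j + j * B \<le> R + j * R"
    using j by (simp add: add_mono)
  moreover have "a / j + j * B = a + b"
    unfolding B_def using j by (simp add: field_simps)
  ultimately have "a + b \<le> (j + 1) * R"
    by (simp add: algebra_simps)
  then show ?thesis
    using s j by (simp add: divide_le_eq mult.commute)
qed

theorem RG_approximation:
  fixes F :: "'v edge set \<Rightarrow> real"
  assumes "acyclic E" and sp: "shortest_path_selector E sp" and dom: "Domain E \<subseteq> set vs"
    and "mono F" and "submodular F"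
  shows "RG i E sp vs F u1 u2 X = Some P \<Longrightarrow> j \<le> i \<Longrightarrow> is_path E u1 u2 S \<Longrightarrow>
    card S \<le> 2 ^ j \<Longrightarrow> marginal F X S / (real j + 1) \<le> marginal F X P"
proof (induction i arbitrary: j u1 u2 X S P)
  have short: "marginal F X S / (real j + 1) \<le> marginal F X P"
    if "RG i E sp vs F u1 u2 X = Some P" "is_path E u1 u2 S" "card S \<le> 1" for i j u1 u2 X S P
  proof -
    have "marginal F X S / (real j + 1) \<le> marginal F X S"
      using divide_left_mono[of 1 "real j + 1"] marginal_nonneg[OF \<open>mono F\<close>] by simp
    also have "\<dots> \<le> marginal F X P"
      using RG_marginal_ge_short_path[OF assms(1,2) that] .
    finally show ?thesis .
  qed
  {
    case 0
    then show ?case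
      using short[where j = j, OF "0.prems"(1,3)] by simp
  next
    case (Suc i)
    show ?case
    proof (cases "card S \<le> 1")
      case True
      then show ?thesis
        using short Suc.prems by blast
    next
      case False
      then obtain j' where j: "j = Suc j'" and "j' \<le> i"
        using Suc.prems(2,4) by (cases j) auto
      have "S \<noteq> {}" and "card S \<le> 2 * 2 ^ j'"
        using False Suc.prems(4) unfolding j by auto
      obtain v S1 S2 where S1: "is_path E u1 v S1" and S2: "is_path E v u2 S2"
        and "S = S1 \<union> S2" and "card S1 \<le> 2 ^ j'" and "card S2 \<le> 2 ^ j'" and "v \<in> Domain E"
        using is_path_split_half[OF Suc.prems(3) \<open>S \<noteq> {}\<close> \<open>card S \<le> 2 * 2 ^ j'\<close>] by blast
      obtain Q1 where Q1: "RG i E sp vs F u1 v X = Some Q1"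
        using RG_eq_None_iff has_pathI[OF S1] by (metis option.exhaust)
      obtain Q2 where Q2: "RG i E sp vs F v u2 (X \<union> Q1) = Some Q2"
        using RG_eq_None_iff has_pathI[OF S2] by (metis option.exhaust)
      have IH1: "marginal F X S1 / (real j' + 1) \<le> marginal F X Q1"
        using Suc.IH[OF Q1 \<open>j' \<le> i\<close> S1 \<open>card S1 \<le> 2 ^ j'\<close>] .
      have IH2: "marginal F (X \<union> Q1) S2 / (real j' + 1) \<le> marginal F (X \<union> Q1) Q2"
        using Suc.IH[OF Q2 \<open>j' \<le> i\<close> S2 \<open>card S2 \<le> 2 ^ j'\<close>] .
      have "v \<in> set vs"
        using dom \<open>v \<in> Domain E\<close> by blast
      then have R: "marginal F X Q1 + marginal F (X \<union> Q1) Q2 \<le> marginal F X P"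
        using RG_Suc_marginal_ge(2)[OF assms(1,2) Suc.prems(1) _ Q1 Q2] by (simp add: marginal_Un)
      have "marginal F X S / (real j' + 1 + 1) \<le> marginal F X P"
      proof (rule split_ratio_bound[where a = "marginal F X S1" and b = "marginal F X S2"
            and q = "marginal F X Q1" and c = "marginal F (X \<union> Q1) S2"])
        show "marginal F X S \<le> marginal F X S1 + marginal F X S2"
          using marginal_Un_le[OF \<open>submodular F\<close>] \<open>S = S1 \<union> S2\<close> by simp
        show "0 \<le> marginal F (X \<union> Q1) S2"
          using marginal_nonneg[OF \<open>mono F\<close>] .
        show "marginal F X S2 - marginal F X Q1 \<le> marginal F (X \<union> Q1) S2"
          using marginal_diff_le[OF \<open>mono F\<close>] .
        show "marginal F X Q1 + marginal F (X \<union> Q1) S2 / (real j' + 1) \<le> marginal F X P"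
          using IH2 R by linarith
      qed (use IH1 in simp_all)
      then show ?thesis
        unfolding j by simp
    qed
  }
qed

section \<open>Throughput reduction for edge-disjoint users\<close>

lemma mono_sum_fun:
  fixes f :: "'i \<Rightarrow> 'a::order \<Rightarrow> 'b::ordered_comm_monoid_add"
  assumes "\<And>i. i \<in> I \<Longrightarrow> mono (f i)"
  shows "mono (\<lambda>A. \<Sum>i\<in>I. f i A)"
proof (rule monoI)
  fix A B :: 'a assume "A \<le> B"
  then show "(\<Sum>i\<in>I. f i A) \<le> (\<Sum>i\<in>I. f i B)"
    using assms by (auto intro: sum_mono dest: monoD)
qed

lemma submodular_sum:
  "(\<And>i. i \<in> I \<Longrightarrow> submodular (f i)) \<Longrightarrow> submodular (\<lambda>A. \<Sum>i\<in>I. f i A)"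
  unfolding submodular_def marginal_def by (auto simp: sum_subtractf[symmetric] intro!: sum_mono)

text \<open>The rate kept by a user with demand \<open>l\<close> on path \<open>q\<close> once \<open>\<gamma>\<close> is injected on the edges
  of \<open>A\<close>, provided no other user shares an edge of \<open>q\<close>.\<close>
definition residual_rate :: "('e \<Rightarrow> real) \<Rightarrow> real \<Rightarrow> 'e set \<Rightarrow> real \<Rightarrow> 'e set \<Rightarrow> real" where
  "residual_rate C \<gamma> q l A = Min (insert l ((\<lambda>e. C e - \<gamma>) ` (q \<inter> A)))"

lemma le_residual_rate_iff:
  "finite q \<Longrightarrow> x \<le> residual_rate C \<gamma> q l A \<longleftrightarrow> x \<le> l \<and> (\<forall>e\<in>q \<inter> A. x \<le> C e - \<gamma>)"
  unfolding residual_rate_def by (subst Min_ge_iff) auto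

lemma residual_rate_le_demand: "finite q \<Longrightarrow> residual_rate C \<gamma> q l A \<le> l"
  unfolding residual_rate_def by (rule Min_le) auto

lemma residual_rate_le_capacity:
  "finite q \<Longrightarrow> e \<in> q \<Longrightarrow> e \<in> A \<Longrightarrow> residual_rate C \<gamma> q l A \<le> C e - \<gamma>"
  unfolding residual_rate_def by (rule Min_le) auto

lemma residual_rate_empty [simp]: "residual_rate C \<gamma> q l {} = l"
  by (simp add: residual_rate_def)

lemma residual_rate_Un:
  assumes "finite q"
  shows "residual_rate C \<gamma> q l (A \<union> B) = min (residual_rate C \<gamma> q l A) (residual_rate C \<gamma> q l B)"
proof -
  have "insert l ((\<lambda>e. C e - \<gamma>) ` (q \<inter> (A \<union> B)))
      = insert l ((\<lambda>e. C e - \<gamma>) ` (q \<inter> A)) \<union> insert l ((\<lambda>e. C e - \<gamma>) ` (q \<inter> B))"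
    by blast
  then show ?thesis
    unfolding residual_rate_def using assms by (simp only:) (rule Min_Un, auto)
qed

lemma residual_rate_antimono:
  "finite q \<Longrightarrow> A \<subseteq> B \<Longrightarrow> residual_rate C \<gamma> q l B \<le> residual_rate C \<gamma> q l A"
  unfolding residual_rate_def by (rule Min_antimono) auto

lemma mono_residual_loss: "finite q \<Longrightarrow> mono (\<lambda>A. l - residual_rate C \<gamma> q l A)"
  by (auto intro!: monoI simp: residual_rate_antimono)

lemma submodular_residual_loss: "finite q \<Longrightarrow> submodular (\<lambda>A. l - residual_rate C \<gamma> q l A)"
  unfolding submodular_def marginal_def
  by (auto simp: residual_rate_Un min_def dest: residual_rate_antimono[of q A _ C \<gamma> l for A])

lemma T_opt_disjoint_paths:
  assumes p: "\<forall>i<k. p i \<subseteq> E \<and> finite (p i)" and "\<forall>e\<in>E. \<gamma> \<le> C e" and "0 \<le> \<gamma>"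
    and lam_nonneg: "\<forall>i<k. 0 \<le> lam i"
    and lam_cap: "\<forall>e\<in>E. (\<Sum>i\<in>{i. i < k \<and> e \<in> p i}. lam i) \<le> C e"
    and disj: "\<forall>i<k. \<forall>j<k. i \<noteq> j \<longrightarrow> p i \<inter> p j = {}"
  shows "T_opt E C \<gamma> k p lam A = (\<Sum>i<k. residual_rate C \<gamma> (p i) (lam i) A)"
proof -
  let ?r = "\<lambda>i. residual_rate C \<gamma> (p i) (lam i) A"
  have users_at: "{j. j < k \<and> e \<in> p j} = {i}" if "i < k" "e \<in> p i" for e i
    using disj that by blast
  have "feasible_tp E C \<gamma> k p lam A ?r"
    unfolding feasible_tp_def
  proof (intro conjI ballI allI impI)
    fix e assume "e \<in> E"
    show "(\<Sum>i\<in>{i. i < k \<and> e \<in> p i}. ?r i) \<le> C e - \<gamma> * (if e \<in> A then 1 else 0)"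
    proof (cases "\<exists>i<k. e \<in> p i")
      case True
      then obtain i where i: "i < k" "e \<in> p i"
        by blast
      have "finite (p i)"
        using p i by blast
      have "lam i \<le> C e"
        using lam_cap \<open>e \<in> E\<close> users_at[OF i] by force
      moreover have "?r i \<le> lam i"
        using residual_rate_le_demand[OF \<open>finite (p i)\<close>] .
      ultimately show ?thesis
        using residual_rate_le_capacity[OF \<open>finite (p i)\<close> i(2)] by (simp add: users_at[OF i])
    next
      case False
      then have "(\<Sum>i\<in>{i. i < k \<and> e \<in> p i}. ?r i) = 0"
        by (intro sum.neutral) blast
      moreover have "\<gamma> \<le> C e"
        using assms(2) \<open>e \<in> E\<close> by blast
      ultimately show ?thesis
        using \<open>0 \<le> \<gamma>\<close> by simp
    qed
  next
    fix i assume "i < k"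
    then have "finite (p i)"
      using p by blast
    then show "?r i \<le> lam i"
      by (rule residual_rate_le_demand)
    show "0 \<le> ?r i"
      using p assms(2) lam_nonneg \<open>i < k\<close> by (auto simp: le_residual_rate_iff[OF \<open>finite (p i)\<close>])
  qed
  moreover have "lt i \<le> ?r i" if "feasible_tp E C \<gamma> k p lam A lt" "i < k" for lt i
  proof -
    have "lt i \<le> C e - \<gamma>" if "e \<in> p i" "e \<in> A" for e
      using \<open>feasible_tp E C \<gamma> k p lam A lt\<close> p \<open>i < k\<close> that
      unfolding feasible_tp_def by (force simp: users_at)
    then show ?thesis
      using that p unfolding feasible_tp_def by (simp add: le_residual_rate_iff)
  qed
  ultimately show ?thesis
    unfolding T_opt_def by (intro cSup_eq_maximum) (auto intro!: sum_mono)
qed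

lemma Lambda_disjoint_paths:
  assumes "\<forall>i<k. p i \<subseteq> E \<and> finite (p i)" and "\<forall>e\<in>E. \<gamma> \<le> C e" and "0 \<le> \<gamma>"
    and "\<forall>i<k. 0 \<le> lam i"
    and "\<forall>e\<in>E. (\<Sum>i\<in>{i. i < k \<and> e \<in> p i}. lam i) \<le> C e"
    and "\<forall>i<k. \<forall>j<k. i \<noteq> j \<longrightarrow> p i \<inter> p j = {}"
  shows "Lambda E C \<gamma> k p lam = (\<lambda>A. \<Sum>i<k. lam i - residual_rate C \<gamma> (p i) (lam i) A)"
  using T_opt_disjoint_paths[OF assms] by (simp add: fun_eq_iff Lambda_def sum_subtractf)

text \<open>Also for \<open>n = 0\<close>, since \<open>ln 0 = 0\<close> makes \<open>log 2 0 = 0\<close>.\<close>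
lemma ceiling_log2_eq_ceillog2: "\<lceil>log 2 (real n)\<rceil> = int (ceillog2 n)"
proof (cases "n = 0")
  case False
  then have "0 \<le> log 2 (real n)"
    by simp
  then have "0 \<le> \<lceil>log 2 (real n)\<rceil>"
    by simp
  then show ?thesis
    using False by (simp add: ceillog2_def)
qed (simp add: log_def)

theorem theorem1:
  fixes V :: "'v set" and E :: "'v edge set" and C :: "'v edge \<Rightarrow> real" and \<gamma> :: real
    and s t :: 'v and k :: nat and p :: "nat \<Rightarrow> 'v edge set" and lam :: "nat \<Rightarrow> real"
    and sp :: "'v \<Rightarrow> 'v \<Rightarrow> 'v edge set" and vs :: "'v list"
    and Estar :: "'v edge set" and I :: nat
  assumes finV: "finite V" and EV: "E \<subseteq> V \<times> V" and noloop: "\<forall>x. (x, x) \<notin> E"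
    and dag: "acyclic E"
    and Cnn: "\<forall>e\<in>E. 0 \<le> C e"
    and sV: "s \<in> V" and tV: "t \<in> V" and st: "has_path E s t"
    and gpos: "0 < \<gamma>" and gle: "\<forall>e\<in>E. \<gamma> \<le> C e"
    and ppath: "\<forall>i<k. is_dpath E (p i)"
    and lamnn: "\<forall>i<k. 0 \<le> lam i"
    and lamcap: "\<forall>e\<in>E. (\<Sum>i\<in>{i. i < k \<and> e \<in> p i}. lam i) \<le> C e"
    and disj: "\<forall>i<k. \<forall>j<k. i \<noteq> j \<longrightarrow> p i \<inter> p j = {}"
    and spsel: "shortest_path_selector E sp"
    and vsV: "set vs = V" and vsd: "distinct vs"
    and Estar_path: "is_path E s t Estar"
    and Estar_max: "\<forall>S. is_path E s t S \<longrightarrow> Lambda E C \<gamma> k p lam S \<le> Lambda E C \<gamma> k p lam Estar"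
    and Ibig: "int I \<ge> \<lceil>log 2 (real (card Estar))\<rceil>"
  shows "\<exists>Ef. RG I E sp vs (Lambda E C \<gamma> k p lam) s t {} = Some Ef \<and> is_path E s t Ef \<and>
           Lambda E C \<gamma> k p lam Ef \<ge>
             Lambda E C \<gamma> k p lam Estar / (real_of_int \<lceil>log 2 (real (card Estar))\<rceil> + 1)"
proof -
  define F where "F = Lambda E C \<gamma> k p lam"
  have paths: "\<forall>i<k. p i \<subseteq> E \<and> finite (p i)"
    using ppath unfolding is_dpath_def is_path_def is_vpath_iff by auto
  have F_eq: "F = (\<lambda>A. \<Sum>i<k. lam i - residual_rate C \<gamma> (p i) (lam i) A)"
    unfolding F_def using Lambda_disjoint_paths[OF paths gle _ lamnn lamcap disj] gpos by simp
  have "mono F" and "submodular F" and "F {} = 0"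
    unfolding F_eq using paths
    by (auto intro!: mono_sum_fun mono_residual_loss submodular_sum submodular_residual_loss)
  obtain Ef where RG_Ef: "RG I E sp vs F s t {} = Some Ef"
    using st RG_eq_None_iff by (metis option.exhaust)
  define j where "j = ceillog2 (card Estar)"
  have "j \<le> I" and "card Estar \<le> 2 ^ j"
    using Ibig le_two_power_ceillog2 unfolding j_def ceiling_log2_eq_ceillog2 by auto
  have "Domain E \<subseteq> set vs"
    using EV vsV by auto
  then have "marginal F {} Estar / (real j + 1) \<le> marginal F {} Ef"
    using RG_approximation[OF dag spsel _ \<open>mono F\<close> \<open>submodular F\<close> RG_Ef \<open>j \<le> I\<close> Estar_path]
      \<open>card Estar \<le> 2 ^ j\<close> by blast
  then show ?thesis
    using RG_Ef RG_is_path[OF dag spsel RG_Ef] \<open>F {} = 0\<close>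
    unfolding F_def j_def ceiling_log2_eq_ceillog2 by simp
qed

end
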